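(* For each $n\in\mathbb{N}$ let $A_n\subseteq\mathcal{R}$ be L-measurable, and suppose $\lim_{N\to\infty}M\big(\bigcap_{n=1}^N A_n\big)$ exists in $\mathcal{R}$. Then $\bigcap_{n=1}^\infty A_n$ is L-measurable.
   Context: $\mathcal{R}$ denotes the Levi-Civita field: functions $x:\mathbb{Q}\to\mathbb{R}$ with left-finite support, with componentwise addition and formal power series multiplication, ordered by $x>0$ iff $x\ne0$ and $x[\min\operatorname{supp}x]>0$; it is a non-Archimedean ordered field extension of $\mathbb{R}$, Cauchy complete in the order topology, in which all limits and series are taken (a series $\sum a_n$ converges iff $a_n\to0$). An interval is a set $[a,b],[a,b),(a,b]$ or $(a,b)$ with $a<b$ in $\mathcal{R}$, of length $l=b-a$. A cover of $A\subseteq\mathcal{R}$ is a sequence of intervals $(S_n)_{n\ge1}$ with $A\subseteq\bigcup_n S_n$ and $\sum_n l(S_n)$ convergent in $\mathcal{R}$. $A$ is called outer measurable if the infimum $\inf\{\sum_n l(S_n): (S_n)\text{ a cover of }A\}$ exists in $\mathcal{R}$; this infimum is then called the outer measure $M_u(A)$. An outer measurable set $A\subseteq\mathcal{R}$ is L-measurable if for every outer measurable $B\subseteq\mathcal{R}$ both $A\cap B$ and $A^c\cap B$ (where $A^c=\mathcal{R}\setminus A$) are outer measurable and $M_u(B)=M_u(A\cap B)+M_u(A^c\cap B)$; then its L-measure is $M(A):=M_u(A)$. Finite intersections of L-measurable sets are L-measurable, so $M(\bigcap_{n=1}^N A_n)$ is defined. *)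

theory Defs
  imports Complex_Main
begin

section \<open>The Levi-Civita field (additive ordered structure)\<close>

definition left_finite :: "(rat \<Rightarrow> real) \<Rightarrow> bool" where
  "left_finite x \<longleftrightarrow> (\<forall>q. finite {p. p < q \<and> x p \<noteq> 0})"

typedef lc = "{x :: rat \<Rightarrow> real. left_finite x}"
  morphisms lc_coeff Abs_lc
  by (rule exI[of _ "\<lambda>_. 0"]) (simp add: left_finite_def)

setup_lifting type_definition_lc

lift_definition lc_zero :: lc is "\<lambda>_. 0"
  by (simp add: left_finite_def)

lift_definition lc_add :: "lc \<Rightarrow> lc \<Rightarrow> lc" is "\<lambda>x y q. x q + y q"
proof -
  fix x y :: "rat \<Rightarrow> real"
  assume "left_finite x" "left_finite y"
  then show "left_finite (\<lambda>q. x q + y q)"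
  proof (unfold left_finite_def, intro allI)
    fix q
    have "{p. p < q \<and> x p + y p \<noteq> 0} \<subseteq> {p. p < q \<and> x p \<noteq> 0} \<union> {p. p < q \<and> y p \<noteq> 0}"
      by auto
    moreover have "finite ({p. p < q \<and> x p \<noteq> 0} \<union> {p. p < q \<and> y p \<noteq> 0})"
      using \<open>left_finite x\<close> \<open>left_finite y\<close> by (simp add: left_finite_def)
    ultimately show "finite {p. p < q \<and> x p + y p \<noteq> 0}" by (rule finite_subset)
  qed
qed

lift_definition lc_neg :: "lc \<Rightarrow> lc" is "\<lambda>x q. - x q"
  by (simp add: left_finite_def)

instantiation lc :: "{zero, plus, uminus, minus, ord}"
begin
definition "0 = lc_zero"
definition "x + y = lc_add x y"
definition "- x = lc_neg x"
definition "x - y = lc_add x (lc_neg y)"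
definition "x < y \<longleftrightarrow>
  (\<exists>q. lc_coeff (y - x) q > 0 \<and> (\<forall>p<q. lc_coeff (y - x) p = 0))"
definition "x \<le> y \<longleftrightarrow> x = y \<or> (x::lc) < y"
instance ..
end

definition lc_tendsto :: "(nat \<Rightarrow> lc) \<Rightarrow> lc \<Rightarrow> bool" where
  "lc_tendsto f L \<longleftrightarrow> (\<forall>e>0. \<exists>N. \<forall>n\<ge>N. L - e < f n \<and> f n < L + e)"

fun lc_psum :: "(nat \<Rightarrow> lc) \<Rightarrow> nat \<Rightarrow> lc" where
  "lc_psum a 0 = 0"
| "lc_psum a (Suc n) = lc_psum a n + a n"

definition lc_sums :: "(nat \<Rightarrow> lc) \<Rightarrow> lc \<Rightarrow> bool" where
  "lc_sums a s \<longleftrightarrow> lc_tendsto (lc_psum a) s"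

definition interval_with_ends :: "lc set \<Rightarrow> lc \<Rightarrow> lc \<Rightarrow> bool" where
  "interval_with_ends S a b \<longleftrightarrow> a < b \<and>
     (S = {a..b} \<or> S = {a..<b} \<or> S = {a<..b} \<or> S = {a<..<b})"

definition cover_sum :: "lc set \<Rightarrow> lc \<Rightarrow> bool" where
  "cover_sum A s \<longleftrightarrow> (\<exists>(I :: nat \<Rightarrow> lc set) a b.
     (\<forall>n. interval_with_ends (I n) (a n) (b n)) \<and> A \<subseteq> (\<Union>n. I n) \<and>
     lc_sums (\<lambda>n. b n - a n) s)"

definition is_lc_inf :: "lc set \<Rightarrow> lc \<Rightarrow> bool" where
  "is_lc_inf S m \<longleftrightarrow> (\<forall>s\<in>S. m \<le> s) \<and> (\<forall>m'. (\<forall>s\<in>S. m' \<le> s) \<longrightarrow> m' \<le> m)"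

definition outer_measurable :: "lc set \<Rightarrow> bool" where
  "outer_measurable A \<longleftrightarrow> (\<exists>m. is_lc_inf {s. cover_sum A s} m)"

definition outer_measure :: "lc set \<Rightarrow> lc" where
  "outer_measure A = (THE m. is_lc_inf {s. cover_sum A s} m)"

definition L_measurable :: "lc set \<Rightarrow> bool" where
  "L_measurable A \<longleftrightarrow> outer_measurable A \<and>
     (\<forall>B. outer_measurable B \<longrightarrow>
        outer_measurable (A \<inter> B) \<and> outer_measurable (- A \<inter> B) \<and>
        outer_measure B = outer_measure (A \<inter> B) + outer_measure (- A \<inter> B))"

definition L_measure :: "lc set \<Rightarrow> lc" where
  "L_measure A = outer_measure A"

end

theory Submission
  imports Defs "HOL-Library.Nat_Bijection"
begin

text \<open>Let \<open>G k = A 1 \<inter> \<dots> \<inter> A (k + 1)\<close>; these sets decrease and \<open>M (G k)\<close> converges. Fix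
  an outer measurable \<open>B\<close>. Since \<open>G (k + 1)\<close> is L-measurable, \<open>M\<^sub>u (G k \<inter> B)\<close> splits into
  \<open>M\<^sub>u (G (k + 1) \<inter> B)\<close> plus the outer measure of the shell \<open>(G k - G (k + 1)) \<inter> B\<close>, which is at
  most \<open>M (G k) - M (G (k + 1))\<close>. These bounds tend to \<open>0\<close>, and in the Levi-Civita field a series
  converges as soon as its terms tend to \<open>0\<close>; hence the shell measures are summable and
  \<open>M\<^sub>u (G k \<inter> B)\<close> converges to some \<open>l\<close>. Covering \<open>(\<Inter>k. G k) \<inter> B\<close> by a single \<open>G N \<inter> B\<close>,
  and \<open>G 0 \<inter> B\<close> by \<open>(\<Inter>k. G k) \<inter> B\<close> together with all shells, shows that the outer measure
  of \<open>(\<Inter>k. G k) \<inter> B\<close> exists and equals \<open>l\<close>; covering \<open>B - (\<Inter>k. G k)\<close> by \<open>B - G 0\<close> and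
  the shells shows that its outer measure is \<open>M\<^sub>u B - l\<close>.\<close>

section \<open>The ordered additive group of the Levi-Civita field\<close>

lemma lc_coeff_zero [simp]: "lc_coeff 0 q = 0"
  by (simp add: zero_lc_def lc_zero.rep_eq)

lemma lc_coeff_add [simp]: "lc_coeff (x + y) q = lc_coeff x q + lc_coeff y q"
  by (simp add: plus_lc_def lc_add.rep_eq)

lemma lc_coeff_uminus [simp]: "lc_coeff (- x) q = - lc_coeff x q"
  by (simp add: uminus_lc_def lc_neg.rep_eq)

lemma lc_coeff_diff [simp]: "lc_coeff (x - y) q = lc_coeff x q - lc_coeff y q"
  by (simp add: minus_lc_def lc_add.rep_eq lc_neg.rep_eq)

lemma lc_eqI: "(\<And>q. lc_coeff x q = lc_coeff y q) \<Longrightarrow> x = y"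
  by (metis lc_coeff_inject ext)

definition lc_pos :: "lc \<Rightarrow> bool" where
  "lc_pos z \<longleftrightarrow> (\<exists>q. lc_coeff z q > 0 \<and> (\<forall>p<q. lc_coeff z p = 0))"

lemma less_lc_iff_pos: "x < y \<longleftrightarrow> lc_pos (y - x)"
  by (simp add: less_lc_def lc_pos_def)

lemma lc_pos_not_uminus: "lc_pos z \<Longrightarrow> \<not> lc_pos (- z)"
proof
  assume "lc_pos z" "lc_pos (- z)"
  then obtain q q' where q: "lc_coeff z q > 0" "\<forall>p<q. lc_coeff z p = 0"
    and q': "lc_coeff (- z) q' > 0" "\<forall>p<q'. lc_coeff (- z) p = 0"
    unfolding lc_pos_def by blast
  show False
    by (cases q q' rule: linorder_cases) (use q q' in force)+
qed

lemma lc_pos_add: "lc_pos z \<Longrightarrow> lc_pos w \<Longrightarrow> lc_pos (z + w)"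
proof -
  assume "lc_pos z" "lc_pos w"
  then obtain q q' where q: "lc_coeff z q > 0" "\<forall>p<q. lc_coeff z p = 0"
    and q': "lc_coeff w q' > 0" "\<forall>p<q'. lc_coeff w p = 0"
    unfolding lc_pos_def by blast
  show ?thesis
  proof (cases q q' rule: linorder_cases)
    case less
    then show ?thesis using q q' unfolding lc_pos_def by (intro exI[of _ q]) auto
  next
    case equal
    then show ?thesis using q q' unfolding lc_pos_def by (intro exI[of _ q]) auto
  next
    case greater
    then show ?thesis using q q' unfolding lc_pos_def by (intro exI[of _ q']) auto
  qed
qed

lemma lc_leading_coeff:
  assumes "z \<noteq> 0"
  obtains m where "lc_coeff z m \<noteq> 0" "\<forall>p<m. lc_coeff z p = 0"
proof -
  obtain q where q: "lc_coeff z q \<noteq> 0"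
    using assms lc_eqI[of z 0] by auto
  define S where "S = {p. p < q + 1 \<and> lc_coeff z p \<noteq> 0}"
  have fin: "finite S"
    using lc_coeff[of z] unfolding S_def left_finite_def by auto
  have "q \<in> S"
    using q unfolding S_def by simp
  then have min: "Min S \<in> S"
    using fin by (rule_tac Min_in) auto
  have "lc_coeff z p = 0" if "p < Min S" for p
  proof (rule ccontr)
    assume "lc_coeff z p \<noteq> 0"
    with that min have "p \<in> S"
      unfolding S_def by auto
    with fin that show False
      using Min_le not_le by blast
  qed
  with min show thesis
    using that unfolding S_def by blast
qed

lemma lc_pos_total: "z \<noteq> 0 \<Longrightarrow> lc_pos z \<or> lc_pos (- z)"
proof -
  assume "z \<noteq> 0"
  then obtain m where m: "lc_coeff z m \<noteq> 0" "\<forall>p<m. lc_coeff z p = 0"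
    by (rule lc_leading_coeff)
  then show ?thesis
    unfolding lc_pos_def by (cases "lc_coeff z m > 0") (auto intro!: exI[of _ m])
qed

lemma lc_pos_nonzero: "lc_pos z \<Longrightarrow> z \<noteq> 0"
  unfolding lc_pos_def by auto

instance lc :: ab_group_add
  by standard (rule lc_eqI; simp)+

instance lc :: linordered_ab_group_add
proof
  fix x y z :: lc
  show "(x < y) = (x \<le> y \<and> \<not> y \<le> x)"
    unfolding less_eq_lc_def less_lc_iff_pos
    using lc_pos_not_uminus[of "y - x"] lc_pos_nonzero[of "y - x"] by auto
  show "x \<le> x"
    by (simp add: less_eq_lc_def)
  show "x \<le> y \<Longrightarrow> y \<le> z \<Longrightarrow> x \<le> z"
    unfolding less_eq_lc_def less_lc_iff_pos
    using lc_pos_add[of "z - y" "y - x"] by (auto simp: algebra_simps)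
  show "x \<le> y \<Longrightarrow> y \<le> x \<Longrightarrow> x = y"
    unfolding less_eq_lc_def less_lc_iff_pos
    using lc_pos_not_uminus[of "y - x"] by auto
  show "x \<le> y \<or> y \<le> x"
    unfolding less_eq_lc_def less_lc_iff_pos
    using lc_pos_total[of "y - x"] by auto
  show "x \<le> y \<Longrightarrow> z + x \<le> z + y"
    unfolding less_eq_lc_def less_lc_iff_pos by auto
qed

lemma lc_pos_leading: "lc_coeff z m > 0 \<Longrightarrow> \<forall>p<m. lc_coeff z p = 0 \<Longrightarrow> 0 < z"
  unfolding less_lc_iff_pos lc_pos_def by auto

lemma lc_neg_leading: "lc_coeff z m < 0 \<Longrightarrow> \<forall>p<m. lc_coeff z p = 0 \<Longrightarrow> z < 0"
  unfolding less_lc_iff_pos lc_pos_def by (intro exI[of _ m]) auto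

lemma lc_posE:
  assumes "0 < z"
  obtains m where "lc_coeff z m > 0" "\<forall>p<m. lc_coeff z p = 0"
  using assms unfolding less_lc_iff_pos lc_pos_def by auto

text \<open>\<open>lc_small r x\<close> says that \<open>x\<close> is infinitely small compared with \<open>d\<^sup>r\<close>, where \<open>d\<close> is the
  basic infinitesimal; these conditions form a neighbourhood basis of \<open>0\<close> in the order topology.\<close>

definition lc_small :: "rat \<Rightarrow> lc \<Rightarrow> bool" where
  "lc_small r x \<longleftrightarrow> (\<forall>p\<le>r. lc_coeff x p = 0)"

lemma lc_small_add: "lc_small r x \<Longrightarrow> lc_small r y \<Longrightarrow> lc_small r (x + y)"
  by (simp add: lc_small_def)

lemma lc_small_uminus: "lc_small r x \<Longrightarrow> lc_small r (- x)"
  by (simp add: lc_small_def)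

lemma lc_small_diff: "lc_small r x \<Longrightarrow> lc_small r y \<Longrightarrow> lc_small r (x - y)"
  by (simp add: lc_small_def)

lemma lc_small_le_level: "lc_small r x \<Longrightarrow> r' \<le> r \<Longrightarrow> lc_small r' x"
  by (simp add: lc_small_def)

lemma lc_small_less:
  assumes "0 < e"
  obtains r where "\<And>x. lc_small r x \<Longrightarrow> x < e"
proof -
  obtain r where r: "lc_coeff e r > 0" "\<forall>p<r. lc_coeff e p = 0"
    using assms by (rule lc_posE)
  have "x < e" if "lc_small r x" for x
  proof -
    have "0 < e - x"
      using r that by (intro lc_pos_leading[of _ r]) (auto simp: lc_small_def)
    then show ?thesis
      by simp
  qed
  then show thesis
    using that by blast
qed

lemma lc_small_order_mono:
  assumes "0 \<le> x" "x \<le> y" "lc_small r y"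
  shows "lc_small r x"
proof (rule ccontr)
  assume "\<not> lc_small r x"
  then obtain p where p: "p \<le> r" "lc_coeff x p \<noteq> 0"
    by (auto simp: lc_small_def)
  then have "x \<noteq> 0"
    by auto
  then obtain m where m: "lc_coeff x m \<noteq> 0" "\<forall>p<m. lc_coeff x p = 0"
    by (rule lc_leading_coeff)
  have "m \<le> p"
    using m p not_le by blast
  then have "m \<le> r"
    using p by simp
  have "lc_coeff x m > 0"
  proof (rule ccontr)
    assume "\<not> lc_coeff x m > 0"
    with m have "x < 0"
      by (intro lc_neg_leading[of _ m]) auto
    with assms(1) show False
      by simp
  qed
  then have "y - x < 0"
    using m \<open>m \<le> r\<close> assms(3) by (intro lc_neg_leading[of _ m]) (auto simp: lc_small_def)
  with assms(2) show False
    by simp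
qed

lemma lc_le_by_small:
  assumes "\<And>r. \<exists>x. lc_small r x \<and> a \<le> b + x"
  shows "a \<le> b"
proof (rule ccontr)
  assume "\<not> a \<le> b"
  then have "0 < a - b"
    by simp
  then obtain r where r: "\<And>x. lc_small r x \<Longrightarrow> x < a - b"
    using lc_small_less by blast
  obtain x where "lc_small r x" "a \<le> b + x"
    using assms by blast
  with r[of x] show False
    by (simp add: algebra_simps)
qed

lift_definition lc_monom :: "rat \<Rightarrow> lc" is "\<lambda>q p. if p = q then 1 else 0"
  unfolding left_finite_def by (auto intro: rev_finite_subset[of "{_}"])

lemma lc_coeff_monom [simp]: "lc_coeff (lc_monom q) p = (if p = q then 1 else 0)"
  by (simp add: lc_monom.rep_eq)

lemma lc_monom_pos: "0 < lc_monom q"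
  by (rule lc_pos_leading[of _ q]) auto

lemma lc_small_monom: "r < q \<Longrightarrow> lc_small r (lc_monom q)"
  by (auto simp: lc_small_def)

lemma lc_small_if_between:
  assumes "- lc_monom (r + 1) < x" "x < lc_monom (r + 1)"
  shows "lc_small r x"
proof (rule ccontr)
  assume "\<not> lc_small r x"
  then obtain p where p: "p \<le> r" "lc_coeff x p \<noteq> 0"
    by (auto simp: lc_small_def)
  then have "x \<noteq> 0"
    by auto
  then obtain m where m: "lc_coeff x m \<noteq> 0" "\<forall>p<m. lc_coeff x p = 0"
    by (rule lc_leading_coeff)
  have "m \<le> p"
    using m p not_le by blast
  then have "m < r + 1"
    using p by simp
  show False
  proof (cases "lc_coeff x m > 0")
    case True
    with m \<open>m < r + 1\<close> have "lc_monom (r + 1) - x < 0"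
      by (intro lc_neg_leading[of _ m]) auto
    with assms(2) show False
      by simp
  next
    case False
    with m \<open>m < r + 1\<close> have "x + lc_monom (r + 1) < 0"
      by (intro lc_neg_leading[of _ m]) auto
    moreover from assms(1) have "0 < x + lc_monom (r + 1)"
      by (metis diff_gt_0_iff_gt diff_minus_eq_add)
    ultimately show False
      by simp
  qed
qed

lemma lc_tendsto_iff_small:
  "lc_tendsto f L \<longleftrightarrow> (\<forall>r. eventually (\<lambda>n. lc_small r (f n - L)) sequentially)"
proof
  assume lim: "lc_tendsto f L"
  show "\<forall>r. eventually (\<lambda>n. lc_small r (f n - L)) sequentially"
  proof
    fix r
    obtain N where N: "\<forall>n\<ge>N. L - lc_monom (r + 1) < f n \<and> f n < L + lc_monom (r + 1)"
      using lim lc_monom_pos unfolding lc_tendsto_def by blast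
    have "lc_small r (f n - L)" if "n \<ge> N" for n
    proof (rule lc_small_if_between)
      show "- lc_monom (r + 1) < f n - L" "f n - L < lc_monom (r + 1)"
        using N that by (simp_all add: algebra_simps)
    qed
    then show "eventually (\<lambda>n. lc_small r (f n - L)) sequentially"
      unfolding eventually_sequentially by blast
  qed
next
  assume small: "\<forall>r. eventually (\<lambda>n. lc_small r (f n - L)) sequentially"
  show "lc_tendsto f L"
    unfolding lc_tendsto_def
  proof (intro allI impI)
    fix e :: lc
    assume "0 < e"
    then obtain r where r: "\<And>x. lc_small r x \<Longrightarrow> x < e"
      using lc_small_less by blast
    obtain N where "\<forall>n\<ge>N. lc_small r (f n - L)"
      using small unfolding eventually_sequentially by blast
    then have "\<forall>n\<ge>N. L - e < f n \<and> f n < L + e"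
      using r lc_small_uminus by (fastforce simp: algebra_simps)
    then show "\<exists>N. \<forall>n\<ge>N. L - e < f n \<and> f n < L + e"
      by blast
  qed
qed

lemma lc_tendsto_unique:
  assumes "lc_tendsto f L" "lc_tendsto f L'"
  shows "L = L'"
proof (rule lc_eqI)
  fix q
  have "eventually (\<lambda>n. lc_small q (f n - L)) sequentially"
    "eventually (\<lambda>n. lc_small q (f n - L')) sequentially"
    using assms unfolding lc_tendsto_iff_small by blast+
  then have "eventually (\<lambda>n. lc_small q (L - L')) sequentially"
    by eventually_elim (drule (1) lc_small_diff, simp)
  then show "lc_coeff L q = lc_coeff L' q"
    by (simp add: lc_small_def)
qed

lemma lc_tendsto_const_diff:
  assumes "lc_tendsto f L"
  shows "lc_tendsto (\<lambda>n. c - f n) (c - L)"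
  unfolding lc_tendsto_iff_small
proof
  fix r
  have "eventually (\<lambda>n. lc_small r (f n - L)) sequentially"
    using assms unfolding lc_tendsto_iff_small by blast
  then show "eventually (\<lambda>n. lc_small r (c - f n - (c - L))) sequentially"
    by eventually_elim (drule lc_small_uminus, simp)
qed

lemma lc_tendsto_Suc_iff: "lc_tendsto (\<lambda>n. f (Suc n)) L \<longleftrightarrow> lc_tendsto f L"
  unfolding lc_tendsto_iff_small
  using eventually_sequentially_Suc[of "\<lambda>n. lc_small _ (f n - L)"] by simp

lemma lc_tendsto_add:
  assumes "lc_tendsto f a" "lc_tendsto g b"
  shows "lc_tendsto (\<lambda>n. f n + g n) (a + b)"
  unfolding lc_tendsto_iff_small
proof
  fix r
  have "eventually (\<lambda>n. lc_small r (f n - a)) sequentially"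
    "eventually (\<lambda>n. lc_small r (g n - b)) sequentially"
    using assms unfolding lc_tendsto_iff_small by blast+
  then show "eventually (\<lambda>n. lc_small r (f n + g n - (a + b))) sequentially"
    by eventually_elim (drule (1) lc_small_add, simp add: algebra_simps)
qed

section \<open>Summable families\<close>

lemma lc_psum_eq_sum: "lc_psum a n = (\<Sum>i<n. a i)"
  by (induction n) auto

lemma lc_sums_add: "lc_sums a s \<Longrightarrow> lc_sums b t \<Longrightarrow> lc_sums (\<lambda>n. a n + b n) (s + t)"
  unfolding lc_sums_def lc_psum_eq_sum sum.distrib by (rule lc_tendsto_add)

lemma lc_coeff_sum: "lc_coeff (sum a F) p = (\<Sum>i\<in>F. lc_coeff (a i) p)"
  by (induction F rule: infinite_finite_induct) auto

text \<open>Null families are exactly the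
  summable ones, and their sum \<open>lc_csum\<close> is computed coefficient by coefficient, each coefficient
  being a finite sum.\<close>

definition lc_null :: "('i \<Rightarrow> lc) \<Rightarrow> bool" where
  "lc_null x \<longleftrightarrow> (\<forall>r. finite {i. \<not> lc_small r (x i)})"

definition lc_csum :: "('i \<Rightarrow> lc) \<Rightarrow> lc" where
  "lc_csum x = Abs_lc (\<lambda>p. \<Sum>i\<in>{i. lc_coeff (x i) p \<noteq> 0}. lc_coeff (x i) p)"

lemma lc_null_iff_eventually:
  "lc_null (x :: nat \<Rightarrow> lc) \<longleftrightarrow> (\<forall>r. eventually (\<lambda>i. lc_small r (x i)) sequentially)"
  unfolding lc_null_def cofinite_eq_sequentially[symmetric] eventually_cofinite ..

lemma lc_support_subset_not_small: "{i. lc_coeff (x i) p \<noteq> 0} \<subseteq> {i. \<not> lc_small p (x i)}"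
  by (auto simp: lc_small_def)

lemma lc_coeff_csum:
  assumes "lc_null x"
  shows "lc_coeff (lc_csum x) p = (\<Sum>i\<in>{i. lc_coeff (x i) p \<noteq> 0}. lc_coeff (x i) p)"
proof -
  let ?c = "\<lambda>p. \<Sum>i\<in>{i. lc_coeff (x i) p \<noteq> 0}. lc_coeff (x i) p"
  have "{p. p < q \<and> ?c p \<noteq> 0} \<subseteq> (\<Union>i\<in>{i. \<not> lc_small q (x i)}. {p. p < q \<and> lc_coeff (x i) p \<noteq> 0})"
    for q
  proof
    fix p
    assume p: "p \<in> {p. p < q \<and> ?c p \<noteq> 0}"
    then obtain i where "lc_coeff (x i) p \<noteq> 0"
      by (metis (mono_tags, lifting) empty_Collect_eq mem_Collect_eq sum.empty)
    with p show "p \<in> (\<Union>i\<in>{i. \<not> lc_small q (x i)}. {p. p < q \<and> lc_coeff (x i) p \<noteq> 0})"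
      unfolding lc_small_def by (auto intro: less_imp_le)
  qed
  moreover have "finite (\<Union>i\<in>{i. \<not> lc_small q (x i)}. {p. p < q \<and> lc_coeff (x i) p \<noteq> 0})" for q
    using assms lc_coeff unfolding lc_null_def left_finite_def by blast
  ultimately have "left_finite ?c"
    unfolding left_finite_def by (blast intro: finite_subset)
  then show ?thesis
    unfolding lc_csum_def by (simp add: Abs_lc_inverse)
qed

lemma lc_coeff_csum_subset:
  assumes "lc_null x" "finite S" "{i. lc_coeff (x i) p \<noteq> 0} \<subseteq> S"
  shows "lc_coeff (lc_csum x) p = (\<Sum>i\<in>S. lc_coeff (x i) p)"
  unfolding lc_coeff_csum[OF assms(1)] using assms(2,3) by (intro sum.mono_neutral_left) auto

lemma lc_csum_minus_sum_small:
  assumes "lc_null x" "finite F" "{i. \<not> lc_small r (x i)} \<subseteq> F"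
  shows "lc_small r (lc_csum x - sum x F)"
  unfolding lc_small_def
proof (intro allI impI)
  fix p
  assume "p \<le> r"
  then have "lc_coeff (x i) p = 0" if "i \<notin> F" for i
    using assms(3) that unfolding lc_small_def by blast
  then have "{i. lc_coeff (x i) p \<noteq> 0} \<subseteq> F"
    by blast
  then show "lc_coeff (lc_csum x - sum x F) p = 0"
    using lc_coeff_csum_subset[OF assms(1,2)] by (simp add: lc_coeff_sum)
qed

lemma lc_null_imp_sums:
  fixes a :: "nat \<Rightarrow> lc"
  assumes "lc_null a"
  shows "lc_sums a (lc_csum a)"
  unfolding lc_sums_def lc_tendsto_iff_small
proof
  fix r
  obtain N where "\<forall>i\<ge>N. lc_small r (a i)"
    using assms unfolding lc_null_iff_eventually eventually_sequentially by blast
  then have N: "{i. \<not> lc_small r (a i)} \<subseteq> {..<N}"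
    using not_less by blast
  have "lc_small r (lc_psum a n - lc_csum a)" if "n \<ge> N" for n
  proof -
    have "{i. \<not> lc_small r (a i)} \<subseteq> {..<n}"
      using that by (intro order_trans[OF N]) simp
    then have "lc_small r (lc_csum a - lc_psum a n)"
      unfolding lc_psum_eq_sum by (rule lc_csum_minus_sum_small[OF assms finite_lessThan])
    then show ?thesis
      using lc_small_uminus[of r "lc_csum a - lc_psum a n"] by simp
  qed
  then show "eventually (\<lambda>n. lc_small r (lc_psum a n - lc_csum a)) sequentially"
    unfolding eventually_sequentially by (intro exI[of _ N] allI impI)
qed

lemma lc_tendsto_imp_null_diff:
  assumes "lc_tendsto g L"
  shows "lc_null (\<lambda>k. g (Suc k) - g k)"
  unfolding lc_null_iff_eventually
proof
  fix r
  have lim: "eventually (\<lambda>k. lc_small r (g k - L)) sequentially"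
    using assms unfolding lc_tendsto_iff_small by blast
  then have "eventually (\<lambda>k. lc_small r (g (Suc k) - L)) sequentially"
    by (rule eventually_sequentially_Suc[THEN iffD2])
  with lim show "eventually (\<lambda>k. lc_small r (g (Suc k) - g k)) sequentially"
    by eventually_elim (drule (1) lc_small_diff, simp)
qed

lemma lc_sums_imp_null: "lc_sums a s \<Longrightarrow> lc_null a"
  using lc_tendsto_imp_null_diff[of "lc_psum a" s] unfolding lc_sums_def by simp

lemma lc_sums_iff: "lc_sums a s \<longleftrightarrow> lc_null a \<and> s = lc_csum a"
  using lc_null_imp_sums lc_sums_imp_null lc_tendsto_unique unfolding lc_sums_def by blast

lemma lc_null_uminus_iff: "lc_null (\<lambda>i. - x i) \<longleftrightarrow> lc_null x"
  unfolding lc_null_def lc_small_def by simp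

lemma lc_sum_le_csum:
  assumes "\<And>i. 0 \<le> x i" "lc_null x" "finite F"
  shows "sum x F \<le> lc_csum x"
proof (rule lc_le_by_small)
  fix r
  define F' where "F' = F \<union> {i. \<not> lc_small r (x i)}"
  have "finite F'"
    using assms(2,3) unfolding F'_def lc_null_def by blast
  have "sum x F \<le> sum x F'"
    using assms(1) \<open>finite F'\<close> unfolding F'_def by (intro sum_mono2) auto
  moreover have "lc_small r (sum x F' - lc_csum x)"
    using lc_csum_minus_sum_small[OF assms(2) \<open>finite F'\<close>, of r] lc_small_uminus
    unfolding F'_def by fastforce
  ultimately show "\<exists>d. lc_small r d \<and> sum x F \<le> lc_csum x + d"
    by (intro exI[of _ "sum x F' - lc_csum x"]) simp
qed

lemma lc_null_order_mono:
  assumes "\<And>i. 0 \<le> x i" "\<And>i. x i \<le> y i" "lc_null y"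
  shows "lc_null x"
  unfolding lc_null_def
proof
  fix r
  have "{i. \<not> lc_small r (x i)} \<subseteq> {i. \<not> lc_small r (y i)}"
    using lc_small_order_mono assms(1,2) by blast
  then show "finite {i. \<not> lc_small r (x i)}"
    using assms(3) unfolding lc_null_def by (blast intro: finite_subset)
qed

lemma lc_csum_reindex:
  assumes "bij h" "lc_null x"
  shows "lc_null (x \<circ> h)" "lc_csum (x \<circ> h) = lc_csum x"
proof -
  have inj: "inj h"
    using assms(1) bij_is_inj by blast
  show null: "lc_null (x \<circ> h)"
    unfolding lc_null_def
  proof
    fix r
    have "finite (h -` {i. \<not> lc_small r (x i)})"
      using assms(2) inj unfolding lc_null_def by (blast intro: finite_vimageI)
    then show "finite {i. \<not> lc_small r ((x \<circ> h) i)}"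
      by (simp add: vimage_def)
  qed
  show "lc_csum (x \<circ> h) = lc_csum x"
  proof (rule lc_eqI)
    fix p
    let ?S = "{i. lc_coeff (x i) p \<noteq> 0}"
    have image: "h ` (h -` ?S) = ?S"
      using assms(1) by (rule surj_image_vimage_eq[OF bij_is_surj])
    have "lc_coeff (lc_csum (x \<circ> h)) p = (\<Sum>i\<in>h -` ?S. lc_coeff (x (h i)) p)"
      unfolding lc_coeff_csum[OF null] by (simp add: vimage_def)
    also have "\<dots> = (\<Sum>i\<in>h ` (h -` ?S). lc_coeff (x i) p)"
      by (subst sum.reindex) (auto intro: inj_on_subset[OF inj])
    also have "\<dots> = lc_coeff (lc_csum x) p"
      unfolding image lc_coeff_csum[OF assms(2)] ..
    finally show "lc_coeff (lc_csum (x \<circ> h)) p = lc_coeff (lc_csum x) p" .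
  qed
qed

lemma lc_sums_reindex:
  fixes h :: "nat \<Rightarrow> 'i"
  assumes "bij h" "lc_null x"
  shows "lc_sums (x \<circ> h) (lc_csum x)"
  using lc_csum_reindex[OF assms] lc_sums_iff by metis

lemma lc_not_small_case_sum:
  "{i. \<not> lc_small r (case_sum a b i)} = {i. \<not> lc_small r (a i)} <+> {i. \<not> lc_small r (b i)}"
proof (intro set_eqI iffI)
  fix i
  assume "i \<in> {i. \<not> lc_small r (case_sum a b i)}"
  then show "i \<in> {i. \<not> lc_small r (a i)} <+> {i. \<not> lc_small r (b i)}"
    by (cases i) auto
qed auto

lemma lc_null_case_sum:
  assumes "lc_null a" "lc_null b"
  shows "lc_null (case_sum a b)"
  using assms unfolding lc_null_def lc_not_small_case_sum by simp

lemma lc_csum_case_sum: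
  assumes "lc_null a" "lc_null b"
  shows "lc_csum (case_sum a b) = lc_csum a + lc_csum b"
proof (rule lc_eqI)
  fix p
  let ?A = "{i. \<not> lc_small p (a i)}" and ?B = "{i. \<not> lc_small p (b i)}"
  have fin: "finite ?A" "finite ?B"
    using assms unfolding lc_null_def by blast+
  have "lc_coeff (lc_csum (case_sum a b)) p = (\<Sum>i\<in>?A <+> ?B. lc_coeff (case_sum a b i) p)"
    using fin lc_support_subset_not_small[of "case_sum a b" p]
    by (intro lc_coeff_csum_subset[OF lc_null_case_sum[OF assms]])
      (auto simp: lc_not_small_case_sum)
  also have "\<dots> = (\<Sum>i\<in>?A. lc_coeff (a i) p) + (\<Sum>i\<in>?B. lc_coeff (b i) p)"
    using fin by (simp add: sum.Plus)
  also have "\<dots> = lc_coeff (lc_csum a + lc_csum b) p"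
    using lc_coeff_csum_subset[OF assms(1) fin(1) lc_support_subset_not_small]
      lc_coeff_csum_subset[OF assms(2) fin(2) lc_support_subset_not_small] by simp
  finally show "lc_coeff (lc_csum (case_sum a b)) p = lc_coeff (lc_csum a + lc_csum b) p" .
qed

text \<open>Nonnegativity bounds every entry by its row sum, so an entry can fail to be small only in
  one of the finitely many rows whose sum is not small.\<close>

lemma lc_csum_Sigma:
  fixes l :: "'i \<Rightarrow> 'j \<Rightarrow> lc"
  assumes nonneg: "\<And>k n. 0 \<le> l k n" and rows: "\<And>k. lc_null (l k)"
    and total: "lc_null (\<lambda>k. lc_csum (l k))"
  shows "lc_null (\<lambda>(k, n). l k n)"
    and "lc_csum (\<lambda>(k, n). l k n) = lc_csum (\<lambda>k. lc_csum (l k))"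
proof -
  let ?x = "\<lambda>(k, n). l k n" and ?s = "\<lambda>k. lc_csum (l k)"
  let ?K = "\<lambda>r. {k. \<not> lc_small r (?s k)}" and ?N = "\<lambda>r k. {n. \<not> lc_small r (l k n)}"
  have "l k n \<le> ?s k" for k n
    using lc_sum_le_csum[OF nonneg rows, of "{n}"] by simp
  then have "lc_small r (?s k) \<Longrightarrow> lc_small r (l k n)" for r k n
    using lc_small_order_mono[OF nonneg] by blast
  then have sub: "{i. \<not> lc_small r (?x i)} \<subseteq> Sigma (?K r) (?N r)" for r
    by (auto simp: case_prod_unfold)
  have fin: "finite (?K r)" "finite (?N r k)" for r k
    using total rows unfolding lc_null_def by blast+
  have finSigma: "finite (Sigma (?K r) (?N r))" for r
    by (intro finite_SigmaI fin)
  show null: "lc_null ?x"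
    unfolding lc_null_def using finSigma sub by (blast intro: finite_subset)
  show "lc_csum ?x = lc_csum ?s"
  proof (rule lc_eqI)
    fix p
    have "lc_coeff (lc_csum ?x) p = (\<Sum>i\<in>Sigma (?K p) (?N p). lc_coeff (?x i) p)"
      using order_trans[OF lc_support_subset_not_small sub]
      by (rule lc_coeff_csum_subset[OF null finSigma])
    also have "\<dots> = (\<Sum>(k, n)\<in>Sigma (?K p) (?N p). lc_coeff (l k n) p)"
      by (intro sum.cong) auto
    also have "\<dots> = (\<Sum>k\<in>?K p. \<Sum>n\<in>?N p k. lc_coeff (l k n) p)"
      by (rule sum.Sigma[symmetric]) (simp_all add: fin)
    also have "\<dots> = (\<Sum>k\<in>?K p. lc_coeff (?s k) p)"
      using lc_coeff_csum_subset[OF rows fin(2) lc_support_subset_not_small]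
      by (intro sum.cong refl) simp
    also have "\<dots> = lc_coeff (lc_csum ?s) p"
      by (rule lc_coeff_csum_subset[OF total fin(1) lc_support_subset_not_small, symmetric])
    finally show "lc_coeff (lc_csum ?x) p = lc_coeff (lc_csum ?s) p" .
  qed
qed

lemma lc_telescoping_dominated:
  assumes nonneg: "\<And>k. 0 \<le> f k - f (Suc k)"
    and dominated: "\<And>k. f k - f (Suc k) \<le> g k - g (Suc k)"
    and lim: "lc_tendsto g L"
  obtains l where "lc_tendsto f l" "lc_sums (\<lambda>k. f k - f (Suc k)) (f 0 - l)"
proof -
  define d where "d k = f k - f (Suc k)" for k
  have "lc_null (\<lambda>k. - (g (Suc k) - g k))"
    unfolding lc_null_uminus_iff by (rule lc_tendsto_imp_null_diff[OF lim])
  then have "lc_null (\<lambda>k. g k - g (Suc k))"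
    by simp
  then have "lc_null d"
    unfolding d_def by (rule lc_null_order_mono[OF nonneg dominated])
  then have sums: "lc_sums d (lc_csum d)"
    by (rule lc_null_imp_sums)
  have "lc_psum d n = f 0 - f n" for n
    unfolding d_def by (induction n) simp_all
  then have "lc_tendsto f (f 0 - lc_csum d)"
    using lc_tendsto_const_diff[OF sums[unfolded lc_sums_def], of "f 0"] by simp
  moreover have "lc_sums d (f 0 - (f 0 - lc_csum d))"
    using sums by simp
  ultimately show thesis
    using that unfolding d_def by blast
qed

section \<open>Covers and outer measure\<close>

abbreviation Mu :: "lc set \<Rightarrow> lc" where
  "Mu \<equiv> outer_measure"

lemma cover_sumE:
  assumes "cover_sum A s"
  obtains I :: "nat \<Rightarrow> lc set" and a b
  where "\<And>n. interval_with_ends (I n) (a n) (b n)" "A \<subseteq> (\<Union>n. I n)"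
    "lc_null (\<lambda>n. b n - a n)" "s = lc_csum (\<lambda>n. b n - a n)"
proof -
  obtain I :: "nat \<Rightarrow> lc set" and a b
    where I: "\<forall>n. interval_with_ends (I n) (a n) (b n)" "A \<subseteq> (\<Union>n. I n)"
    "lc_sums (\<lambda>n. b n - a n) s"
    using assms unfolding cover_sum_def by blast
  from I(3) have "lc_null (\<lambda>n. b n - a n)" "s = lc_csum (\<lambda>n. b n - a n)"
    unfolding lc_sums_iff by simp_all
  with I(1,2) show thesis
    using that by blast
qed

lemma cover_sum_family:
  fixes h :: "nat \<Rightarrow> 'i" and I :: "'i \<Rightarrow> lc set"
  assumes "bij h" "\<And>i. interval_with_ends (I i) (a i) (b i)" "A \<subseteq> (\<Union>i. I i)"
    "lc_null (\<lambda>i. b i - a i)"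
  shows "cover_sum A (lc_csum (\<lambda>i. b i - a i))"
  unfolding cover_sum_def
proof (intro exI conjI allI)
  show "interval_with_ends ((I \<circ> h) n) ((a \<circ> h) n) ((b \<circ> h) n)" for n
    using assms(2) by simp
  have "range (I \<circ> h) = range I"
    using assms(1) by (metis bij_is_surj image_comp)
  with assms(3) show "A \<subseteq> (\<Union>n. (I \<circ> h) n)"
    by (simp only:)
  show "lc_sums (\<lambda>n. (b \<circ> h) n - (a \<circ> h) n) (lc_csum (\<lambda>i. b i - a i))"
    using lc_sums_reindex[OF assms(1,4)] by (simp add: comp_def)
qed

lemma interval_with_ends_length_nonneg: "interval_with_ends S a b \<Longrightarrow> 0 \<le> b - a"
  unfolding interval_with_ends_def by (simp add: less_imp_le)

lemma cover_sum_nonneg: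
  assumes "cover_sum A s"
  shows "0 \<le> s"
proof -
  obtain I :: "nat \<Rightarrow> lc set" and a b where I: "\<And>n. interval_with_ends (I n) (a n) (b n)"
    "lc_null (\<lambda>n. b n - a n)" "s = lc_csum (\<lambda>n. b n - a n)"
    using cover_sumE[OF assms] by blast
  show ?thesis
    using lc_sum_le_csum[OF interval_with_ends_length_nonneg[OF I(1)] I(2) finite.emptyI] I(3)
    by simp
qed

lemma cover_sum_subset: "cover_sum B s \<Longrightarrow> A \<subseteq> B \<Longrightarrow> cover_sum A s"
  unfolding cover_sum_def by blast

lemma cover_sum_Un:
  assumes "cover_sum E s" "cover_sum F t"
  shows "cover_sum (E \<union> F) (s + t)"
proof -
  obtain I :: "nat \<Rightarrow> lc set" and a b
    where I: "\<And>n. interval_with_ends (I n) (a n) (b n)" "E \<subseteq> (\<Union>n. I n)"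
    "lc_null (\<lambda>n. b n - a n)" "s = lc_csum (\<lambda>n. b n - a n)"
    using cover_sumE[OF assms(1)] by blast
  obtain J :: "nat \<Rightarrow> lc set" and c d
    where J: "\<And>n. interval_with_ends (J n) (c n) (d n)" "F \<subseteq> (\<Union>n. J n)"
    "lc_null (\<lambda>n. d n - c n)" "t = lc_csum (\<lambda>n. d n - c n)"
    using cover_sumE[OF assms(2)] by blast
  have lengths: "(\<lambda>i. case_sum b d i - case_sum a c i) = case_sum (\<lambda>n. b n - a n) (\<lambda>n. d n - c n)"
    by (auto split: sum.split)
  have "cover_sum (E \<union> F) (lc_csum (\<lambda>i. case_sum b d i - case_sum a c i))"
  proof (rule cover_sum_family[OF bij_sum_decode])
    show "interval_with_ends (case_sum I J i) (case_sum a c i) (case_sum b d i)" for i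
      using I(1) J(1) by (cases i) simp_all
    show "E \<union> F \<subseteq> (\<Union>i. case_sum I J i)"
    proof
      fix x
      assume "x \<in> E \<union> F"
      then consider n where "x \<in> case_sum I J (Inl n)" | n where "x \<in> case_sum I J (Inr n)"
        using I(2) J(2) by auto
      then show "x \<in> (\<Union>i. case_sum I J i)"
        by cases blast+
    qed
    show "lc_null (\<lambda>i. case_sum b d i - case_sum a c i)"
      unfolding lengths using I(3) J(3) by (rule lc_null_case_sum)
  qed
  then show ?thesis
    unfolding lengths lc_csum_case_sum[OF I(3) J(3)] I(4) J(4) .
qed

lemma cover_sum_UN:
  assumes "\<And>k. cover_sum (E k) (s k)" "lc_sums s T"
  shows "cover_sum (\<Union>k. E k) T"
proof -
  have "\<forall>k. \<exists>I a b. (\<forall>n. interval_with_ends (I n) (a n) (b n)) \<and> E k \<subseteq> (\<Union>n. I n) \<and>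
      lc_sums (\<lambda>n. b n - a n) (s k)"
    using assms(1) unfolding cover_sum_def by blast
  then obtain I :: "nat \<Rightarrow> nat \<Rightarrow> lc set" and a b where
    I: "\<And>k n. interval_with_ends (I k n) (a k n) (b k n)" "\<And>k. E k \<subseteq> (\<Union>n. I k n)"
      "\<And>k. lc_sums (\<lambda>n. b k n - a k n) (s k)"
    by metis
  then have I_null: "\<And>k. lc_null (\<lambda>n. b k n - a k n)"
    and I_sum: "\<And>k. s k = lc_csum (\<lambda>n. b k n - a k n)"
    unfolding lc_sums_iff by blast+
  let ?l = "\<lambda>k n. b k n - a k n"
  have nonneg: "0 \<le> ?l k n" for k n
    using I(1) by (rule interval_with_ends_length_nonneg)
  have total: "lc_null (\<lambda>k. lc_csum (?l k))" "T = lc_csum (\<lambda>k. lc_csum (?l k))"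
    using assms(2) unfolding lc_sums_iff I_sum[symmetric] by simp_all
  have lengths: "(\<lambda>i. case_prod b i - case_prod a i) = (\<lambda>(k, n). ?l k n)"
    by auto
  have "cover_sum (\<Union>k. E k) (lc_csum (\<lambda>i. case_prod b i - case_prod a i))"
  proof (rule cover_sum_family[OF bij_prod_decode])
    show "interval_with_ends (case_prod I i) (case_prod a i) (case_prod b i)" for i
      using I(1) by (cases i) simp
    show "(\<Union>k. E k) \<subseteq> (\<Union>i. case_prod I i)"
    proof
      fix x
      assume "x \<in> (\<Union>k. E k)"
      then obtain k where "x \<in> E k"
        by blast
      then obtain n where "x \<in> case_prod I (k, n)"
        using I(2) by auto
      then show "x \<in> (\<Union>i. case_prod I i)"
        by blast
    qed
    show "lc_null (\<lambda>i. case_prod b i - case_prod a i)"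
      unfolding lengths using nonneg I_null total(1) by (rule lc_csum_Sigma)
  qed
  then show ?thesis
    unfolding lengths lc_csum_Sigma(2)[OF nonneg I_null total(1)] total(2)[symmetric] .
qed

lemma is_lc_inf_unique: "is_lc_inf S m \<Longrightarrow> is_lc_inf S m' \<Longrightarrow> m = m'"
  unfolding is_lc_inf_def by (meson order.antisym)

lemma outer_measure_is_inf: "outer_measurable A \<Longrightarrow> is_lc_inf {s. cover_sum A s} (Mu A)"
  unfolding outer_measurable_def outer_measure_def by (metis is_lc_inf_unique theI)

lemma outer_measure_le_cover: "outer_measurable A \<Longrightarrow> cover_sum A s \<Longrightarrow> Mu A \<le> s"
  using outer_measure_is_inf unfolding is_lc_inf_def by blast

lemma outer_measure_approx:
  assumes "outer_measurable A"
  obtains s where "cover_sum A s" "lc_small r (s - Mu A)"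
proof -
  have inf: "is_lc_inf {s. cover_sum A s} (Mu A)"
    using assms by (rule outer_measure_is_inf)
  have "\<not> Mu A + lc_monom (r + 1) \<le> Mu A"
    using lc_monom_pos[of "r + 1"] by simp
  then obtain s where s: "cover_sum A s" "\<not> Mu A + lc_monom (r + 1) \<le> s"
    using inf unfolding is_lc_inf_def by blast
  have "0 \<le> s - Mu A"
    using inf s(1) unfolding is_lc_inf_def by simp
  moreover have "s - Mu A \<le> lc_monom (r + 1)"
    using s(2) by (simp add: algebra_simps)
  ultimately have "lc_small r (s - Mu A)"
    using lc_small_order_mono lc_small_monom by (meson less_add_one)
  with s(1) show thesis
    by (rule that)
qed

lemma outer_measure_eqI:
  assumes lower: "\<And>s. cover_sum A s \<Longrightarrow> m \<le> s"
    and approx: "\<And>r. \<exists>s. cover_sum A s \<and> lc_small r (s - m)"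
  shows "outer_measurable A" "Mu A = m"
proof -
  have "m' \<le> m" if "\<forall>s\<in>{s. cover_sum A s}. m' \<le> s" for m'
  proof (rule lc_le_by_small)
    fix r
    obtain s where "cover_sum A s" "lc_small r (s - m)"
      using approx by blast
    with that show "\<exists>x. lc_small r x \<and> m' \<le> m + x"
      by (intro exI[of _ "s - m"]) simp
  qed
  then have inf: "is_lc_inf {s. cover_sum A s} m"
    unfolding is_lc_inf_def using lower by blast
  then show measurable: "outer_measurable A"
    unfolding outer_measurable_def by blast
  show "Mu A = m"
    using is_lc_inf_unique[OF outer_measure_is_inf[OF measurable] inf] .
qed

lemma outer_measure_mono:
  assumes "A \<subseteq> B" "outer_measurable A" "outer_measurable B"
  shows "Mu A \<le> Mu B"
proof (rule lc_le_by_small)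
  fix r
  obtain s where s: "cover_sum B s" "lc_small r (s - Mu B)"
    using assms(3) by (rule outer_measure_approx)
  then have "Mu A \<le> s"
    using outer_measure_le_cover[OF assms(2)] cover_sum_subset assms(1) by blast
  with s(2) show "\<exists>x. lc_small r x \<and> Mu A \<le> Mu B + x"
    by (intro exI[of _ "s - Mu B"]) simp
qed

lemma outer_measure_nonneg:
  assumes "outer_measurable A"
  shows "0 \<le> Mu A"
proof (rule lc_le_by_small)
  fix r
  obtain s where s: "cover_sum A s" "lc_small r (s - Mu A)"
    using assms by (rule outer_measure_approx)
  with cover_sum_nonneg[OF s(1)] show "\<exists>x. lc_small r x \<and> 0 \<le> Mu A + x"
    by (intro exI[of _ "s - Mu A"]) simp
qed

lemma outer_measure_le_Un_cover:
  assumes "outer_measurable B" "outer_measurable X" "B \<subseteq> X \<union> Y" "cover_sum Y s"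
  shows "Mu B \<le> Mu X + s"
proof (rule lc_le_by_small)
  fix r
  obtain t where t: "cover_sum X t" "lc_small r (t - Mu X)"
    using assms(2) by (rule outer_measure_approx)
  have "cover_sum B (t + s)"
    using cover_sum_Un[OF t(1) assms(4)] assms(3) by (rule cover_sum_subset)
  then have "Mu B \<le> t + s"
    by (rule outer_measure_le_cover[OF assms(1)])
  with t(2) show "\<exists>x. lc_small r x \<and> Mu B \<le> Mu X + s + x"
    by (intro exI[of _ "t - Mu X"]) (simp add: algebra_simps)
qed

lemma cover_sum_Un_approx:
  assumes "outer_measurable E" "outer_measurable F"
  shows "\<exists>u. cover_sum (E \<union> F) u \<and> lc_small r (u - (Mu E + Mu F))"
proof -
  obtain s where s: "cover_sum E s" "lc_small r (s - Mu E)"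
    using assms(1) by (rule outer_measure_approx)
  obtain t where t: "cover_sum F t" "lc_small r (t - Mu F)"
    using assms(2) by (rule outer_measure_approx)
  have "lc_small r ((s - Mu E) + (t - Mu F))"
    using s(2) t(2) by (rule lc_small_add)
  then have "lc_small r ((s + t) - (Mu E + Mu F))"
    by (simp add: algebra_simps)
  with cover_sum_Un[OF s(1) t(1)] show ?thesis
    by blast
qed

lemma finite_nat_of_nat_le: "finite {k :: nat. of_nat k \<le> (c :: rat)}"
proof (rule finite_subset)
  show "{k :: nat. of_nat k \<le> c} \<subseteq> {..nat \<lceil>c\<rceil>}"
  proof
    fix k
    assume "k \<in> {k :: nat. of_nat k \<le> c}"
    then have "int k \<le> \<lceil>c\<rceil>"
      by (metis ceiling_mono ceiling_of_nat mem_Collect_eq)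
    then show "k \<in> {..nat \<lceil>c\<rceil>}"
      by simp
  qed
qed simp

text \<open>The \<open>k\<close>-th cover is chosen within \<open>d\<^sup>r\<^sup>+\<^sup>k\<close> of the outer measure, so the errors form a null
  family whose sum is small at level \<open>r\<close>.\<close>

lemma cover_sum_UN_approx:
  assumes measurable: "\<And>k. outer_measurable (Q k)" and sums: "lc_sums (\<lambda>k. Mu (Q k)) S"
  obtains x where "cover_sum (\<Union>k. Q k) (S + x)" "lc_small r x"
proof -
  have "\<forall>k. \<exists>t. cover_sum (Q k) t \<and> lc_small (r + of_nat k) (t - Mu (Q k))"
    using outer_measure_approx[OF measurable] by metis
  then obtain t where t: "\<And>k. cover_sum (Q k) (t k)" "\<And>k. lc_small (r + of_nat k) (t k - Mu (Q k))"
    by metis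
  define e where "e k = t k - Mu (Q k)" for k
  have "{k. \<not> lc_small r' (e k)} \<subseteq> {k. of_nat k \<le> r' - r}" for r'
  proof (intro subsetI CollectI)
    fix k
    assume "k \<in> {k. \<not> lc_small r' (e k)}"
    then have "\<not> r' \<le> r + of_nat k"
      using lc_small_le_level[OF t(2)] unfolding e_def by blast
    then show "of_nat k \<le> r' - r"
      by simp
  qed
  then have null: "lc_null e"
    unfolding lc_null_def using finite_nat_of_nat_le by (blast intro: finite_subset)
  have "lc_small r (e k)" for k
    using t(2)[of k] unfolding e_def by (rule lc_small_le_level) simp
  then have "lc_small r (lc_csum e - sum e {})"
    by (intro lc_csum_minus_sum_small[OF null]) simp_all
  moreover have "lc_sums t (S + lc_csum e)"
    using lc_sums_add[OF sums lc_null_imp_sums[OF null]] unfolding e_def by simp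
  then have "cover_sum (\<Union>k. Q k) (S + lc_csum e)"
    using t(1) by (intro cover_sum_UN)
  ultimately show thesis
    using that by simp
qed

lemma L_measurableD:
  assumes "L_measurable A" "outer_measurable B"
  shows "outer_measurable (A \<inter> B)" "outer_measurable (B - A)"
    and "Mu B = Mu (A \<inter> B) + Mu (B - A)"
  using assms unfolding L_measurable_def Diff_eq Int_commute[of B] by blast+

lemma L_measurable_Int:
  assumes A: "L_measurable A" and A': "L_measurable A'"
  shows "L_measurable (A \<inter> A')"
  unfolding L_measurable_def
proof (intro conjI allI impI)
  have "outer_measurable (A' \<inter> A)"
    using A by (intro L_measurableD(1)[OF A']) (simp add: L_measurable_def)
  then show "outer_measurable (A \<inter> A')"
    by (simp add: Int_commute)
next
  fix B
  assume B: "outer_measurable B"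
  note split_A = L_measurableD[OF A B]
  note split_A' = L_measurableD[OF A' split_A(1)]
  have inside: "A \<inter> A' \<inter> B = A' \<inter> (A \<inter> B)"
    by blast
  have outside: "- (A \<inter> A') \<inter> B = (A \<inter> B - A') \<union> (B - A)"
    by blast
  let ?m = "Mu (A \<inter> B - A') + Mu (B - A)"
  have lower: "?m \<le> s" if "cover_sum (- (A \<inter> A') \<inter> B) s" for s
  proof -
    have "Mu B \<le> Mu (A' \<inter> (A \<inter> B)) + s"
      using that by (intro outer_measure_le_Un_cover[OF B split_A'(1)]) auto
    then show ?thesis
      using split_A(3) split_A'(3) by (simp add: algebra_simps)
  qed
  have approx: "\<exists>s. cover_sum (- (A \<inter> A') \<inter> B) s \<and> lc_small r (s - ?m)" for r
    unfolding outside by (rule cover_sum_Un_approx[OF split_A'(2) split_A(2)])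
  note outer = outer_measure_eqI[OF lower approx]
  show "outer_measurable (A \<inter> A' \<inter> B)"
    unfolding inside by (rule split_A'(1))
  show "outer_measurable (- (A \<inter> A') \<inter> B)"
    by (rule outer(1))
  show "Mu B = Mu (A \<inter> A' \<inter> B) + Mu (- (A \<inter> A') \<inter> B)"
    using split_A(3) split_A'(3) outer(2) unfolding inside by (simp add: algebra_simps)
qed

section \<open>Decreasing intersections\<close>

lemma Diff_Inter_subset_UN_shells: "G 0 - (\<Inter>k. G k) \<subseteq> (\<Union>k. G k - G (Suc k))"
proof
  fix x
  assume "x \<in> G 0 - (\<Inter>k. G k)"
  then obtain k where "x \<in> G 0" "x \<notin> G k"
    by blast
  moreover have "x \<in> G 0 \<Longrightarrow> x \<notin> G k \<Longrightarrow> \<exists>j. x \<in> G j - G (Suc j)" for k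
    by (induction k) auto
  ultimately show "x \<in> (\<Union>k. G k - G (Suc k))"
    by blast
qed

context
  fixes G :: "nat \<Rightarrow> lc set" and B :: "lc set" and l :: lc
  assumes measurable: "\<And>k. L_measurable (G k)" and B: "outer_measurable B"
    and lim: "lc_tendsto (\<lambda>k. Mu (G k \<inter> B)) l"
    and shells: "lc_sums (\<lambda>k. Mu (G k \<inter> B - G (Suc k))) (Mu (G 0 \<inter> B) - l)"
begin

lemma cover_sum_shells_approx:
  obtains x where "cover_sum (\<Union>k. G k \<inter> B - G (Suc k)) (Mu (G 0 \<inter> B) - l + x)" "lc_small r x"
proof (rule cover_sum_UN_approx[OF _ shells])
  show "outer_measurable (G k \<inter> B - G (Suc k))" for k
    using L_measurableD(1)[OF measurable B] by (rule L_measurableD(2)[OF measurable])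
qed (rule that)

lemma outer_measure_Inter_Int:
  shows "outer_measurable ((\<Inter>k. G k) \<inter> B)" "Mu ((\<Inter>k. G k) \<inter> B) = l"
proof -
  have lower: "l \<le> s" if s: "cover_sum ((\<Inter>k. G k) \<inter> B) s" for s
  proof (rule lc_le_by_small)
    fix r
    obtain x where x: "cover_sum (\<Union>k. G k \<inter> B - G (Suc k)) (Mu (G 0 \<inter> B) - l + x)" "lc_small r x"
      by (rule cover_sum_shells_approx)
    have "G 0 \<inter> B \<subseteq> ((\<Inter>k. G k) \<inter> B) \<union> (\<Union>k. G k \<inter> B - G (Suc k))"
      using Diff_Inter_subset_UN_shells[of G] by blast
    then have "cover_sum (G 0 \<inter> B) (s + (Mu (G 0 \<inter> B) - l + x))"
      by (rule cover_sum_subset[OF cover_sum_Un[OF s x(1)]])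
    then have "Mu (G 0 \<inter> B) \<le> s + (Mu (G 0 \<inter> B) - l + x)"
      by (rule outer_measure_le_cover[OF L_measurableD(1)[OF measurable B]])
    with x(2) show "\<exists>x. lc_small r x \<and> l \<le> s + x"
      by (intro exI[of _ x]) (simp add: algebra_simps)
  qed
  have approx: "\<exists>s. cover_sum ((\<Inter>k. G k) \<inter> B) s \<and> lc_small r (s - l)" for r
  proof -
    obtain N where N: "lc_small r (Mu (G N \<inter> B) - l)"
      using lim unfolding lc_tendsto_iff_small eventually_sequentially by blast
    obtain w where w: "cover_sum (G N \<inter> B) w" "lc_small r (w - Mu (G N \<inter> B))"
      using L_measurableD(1)[OF measurable B] by (rule outer_measure_approx)
    have "cover_sum ((\<Inter>k. G k) \<inter> B) w"
      using w(1) by (rule cover_sum_subset) blast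
    moreover have "lc_small r (w - l)"
      using lc_small_add[OF w(2) N] by simp
    ultimately show ?thesis
      by blast
  qed
  show "outer_measurable ((\<Inter>k. G k) \<inter> B)" "Mu ((\<Inter>k. G k) \<inter> B) = l"
    using outer_measure_eqI[OF lower approx] by simp_all
qed

lemma outer_measure_Compl_Inter_Int:
  shows "outer_measurable (- (\<Inter>k. G k) \<inter> B)" "Mu (- (\<Inter>k. G k) \<inter> B) = Mu B - l"
proof -
  have lower: "Mu B - l \<le> s" if "cover_sum (- (\<Inter>k. G k) \<inter> B) s" for s
  proof -
    from that have "Mu B \<le> Mu ((\<Inter>k. G k) \<inter> B) + s"
      by (intro outer_measure_le_Un_cover[OF B outer_measure_Inter_Int(1)]) auto
    then show ?thesis
      unfolding outer_measure_Inter_Int(2) by (simp add: algebra_simps)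
  qed
  have approx: "\<exists>s. cover_sum (- (\<Inter>k. G k) \<inter> B) s \<and> lc_small r (s - (Mu B - l))" for r
  proof -
    note split = L_measurableD[OF measurable B, of 0]
    obtain w where w: "cover_sum (B - G 0) w" "lc_small r (w - Mu (B - G 0))"
      using split(2) by (rule outer_measure_approx)
    obtain x where x: "cover_sum (\<Union>k. G k \<inter> B - G (Suc k)) (Mu (G 0 \<inter> B) - l + x)" "lc_small r x"
      by (rule cover_sum_shells_approx)
    have "- (\<Inter>k. G k) \<inter> B \<subseteq> (B - G 0) \<union> (\<Union>k. G k \<inter> B - G (Suc k))"
      using Diff_Inter_subset_UN_shells[of G] by blast
    then have "cover_sum (- (\<Inter>k. G k) \<inter> B) (w + (Mu (G 0 \<inter> B) - l + x))"
      by (rule cover_sum_subset[OF cover_sum_Un[OF w(1) x(1)]])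
    moreover have "lc_small r (w + (Mu (G 0 \<inter> B) - l + x) - (Mu B - l))"
      using lc_small_add[OF w(2) x(2)] split(3) by (simp add: algebra_simps)
    ultimately show ?thesis
      by blast
  qed
  show "outer_measurable (- (\<Inter>k. G k) \<inter> B)" "Mu (- (\<Inter>k. G k) \<inter> B) = Mu B - l"
    using outer_measure_eqI[OF lower approx] by simp_all
qed

end

lemma outer_measure_Diff_L_measurable:
  assumes "L_measurable C" "outer_measurable A"
  shows "Mu (A - C) = Mu A - Mu (C \<inter> A)"
  using L_measurableD(3)[OF assms] by simp

lemma L_measurable_Inter_decseq:
  assumes measurable: "\<And>k. L_measurable (G k)" and "decseq G"
    and lim: "lc_tendsto (\<lambda>k. Mu (G k)) L"
  shows "L_measurable (\<Inter>k. G k)"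
proof -
  have G_Suc: "G (Suc k) \<subseteq> G k" for k
    using \<open>decseq G\<close> by (simp add: decseq_Suc_iff)
  have G_measurable: "outer_measurable (G k)" for k
    using measurable unfolding L_measurable_def by blast
  have split: "outer_measurable ((\<Inter>k. G k) \<inter> B) \<and> outer_measurable (- (\<Inter>k. G k) \<inter> B) \<and>
      Mu B = Mu ((\<Inter>k. G k) \<inter> B) + Mu (- (\<Inter>k. G k) \<inter> B)" if B: "outer_measurable B" for B
  proof -
    have GB: "outer_measurable (G k \<inter> B)" for k
      using measurable B by (rule L_measurableD(1))
    have shell: "Mu (G k \<inter> B - G (Suc k)) = Mu (G k \<inter> B) - Mu (G (Suc k) \<inter> B)" for k
      using outer_measure_Diff_L_measurable[OF measurable GB] G_Suc[of k]
      by (simp add: Int_absorb2 flip: Int_assoc)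
    have shell_G: "Mu (G k - G (Suc k)) = Mu (G k) - Mu (G (Suc k))" for k
      using outer_measure_Diff_L_measurable[OF measurable G_measurable] G_Suc[of k]
      by (simp add: Int_absorb2)
    have "Mu (G k \<inter> B - G (Suc k)) \<le> Mu (G k - G (Suc k))" for k
      using L_measurableD(2)[OF measurable GB] L_measurableD(2)[OF measurable G_measurable]
      by (intro outer_measure_mono) auto
    then have dominated: "Mu (G k \<inter> B) - Mu (G (Suc k) \<inter> B) \<le> Mu (G k) - Mu (G (Suc k))" for k
      unfolding shell shell_G .
    have nonneg: "0 \<le> Mu (G k \<inter> B) - Mu (G (Suc k) \<inter> B)" for k
      unfolding shell[symmetric]
      by (rule outer_measure_nonneg[OF L_measurableD(2)[OF measurable GB]])
    obtain l where l: "lc_tendsto (\<lambda>k. Mu (G k \<inter> B)) l"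
      "lc_sums (\<lambda>k. Mu (G k \<inter> B) - Mu (G (Suc k) \<inter> B)) (Mu (G 0 \<inter> B) - l)"
      by (rule lc_telescoping_dominated[OF nonneg dominated lim])
    have shells: "lc_sums (\<lambda>k. Mu (G k \<inter> B - G (Suc k))) (Mu (G 0 \<inter> B) - l)"
      using l(2) by (simp only: shell)
    show ?thesis
      using outer_measure_Inter_Int[OF measurable B l(1) shells]
        outer_measure_Compl_Inter_Int[OF measurable B l(1) shells] by simp
  qed
  have "(\<Inter>k. G k) \<inter> G 0 = (\<Inter>k. G k)"
    by blast
  then have "outer_measurable (\<Inter>k. G k)"
    using split[OF G_measurable[of 0]] by simp
  with split show ?thesis
    unfolding L_measurable_def by blast
qed

lemma INT_atLeastAtMost_Suc:
  "(\<Inter>n\<in>{1..Suc (Suc k)}. A n) = (\<Inter>n\<in>{1..Suc k}. A n) \<inter> A (Suc (Suc k))"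
  by (auto simp: atLeastAtMostSuc_conv)

lemma L_measurable_INT_atLeastAtMost:
  assumes "\<forall>n\<ge>1. L_measurable (A n)"
  shows "L_measurable (\<Inter>n\<in>{1..Suc k}. A n)"
proof (induction k)
  case 0
  then show ?case
    using assms by simp
next
  case (Suc k)
  then show ?case
    unfolding INT_atLeastAtMost_Suc using assms by (simp add: L_measurable_Int)
qed

lemma INT_atLeast_eq_INT_prefixes: "(\<Inter>n\<in>{1..}. A n) = (\<Inter>k. \<Inter>n\<in>{1..Suc k}. A n)"
proof (intro equalityI subsetI)
  fix x
  assume x: "x \<in> (\<Inter>k. \<Inter>n\<in>{1..Suc k}. A n)"
  have "x \<in> A n" if "n \<ge> 1" for n
  proof -
    from x have "x \<in> (\<Inter>m\<in>{1..Suc n}. A m)"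
      by blast
    with that show ?thesis
      by simp
  qed
  then show "x \<in> (\<Inter>n\<in>{1..}. A n)"
    by simp
qed auto

theorem mainTheorem20:
  fixes A :: "nat \<Rightarrow> lc set"
  assumes "\<forall>n\<ge>1. L_measurable (A n)"
    and "\<exists>L. lc_tendsto (\<lambda>N. L_measure (\<Inter>n\<in>{1..N}. A n)) L"
  shows "L_measurable (\<Inter>n\<in>{1..}. A n)"
proof -
  define G where "G k = (\<Inter>n\<in>{1..Suc k}. A n)" for k
  have "decseq G"
    unfolding decseq_Suc_iff G_def INT_atLeastAtMost_Suc by blast
  obtain L where "lc_tendsto (\<lambda>N. Mu (\<Inter>n\<in>{1..N}. A n)) L"
    using assms(2) unfolding L_measure_def by blast
  then have "lc_tendsto (\<lambda>k. Mu (G k)) L"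
    unfolding G_def by (rule lc_tendsto_Suc_iff[THEN iffD2])
  then have "L_measurable (\<Inter>k. G k)"
    using L_measurable_INT_atLeastAtMost[OF assms(1)] \<open>decseq G\<close>
    unfolding G_def by (intro L_measurable_Inter_decseq)
  then show ?thesis
    unfolding G_def INT_atLeast_eq_INT_prefixes .
qed

end
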